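(* Let $p,q$ be positive integers with $\frac1p+\frac1q=\frac12$ and let $M$ be a $\{p,q\}$-map. Then the sum $I_v^b$ of the curvatures of the exterior vertices of $M$ satisfies $I_v^b\ge p$.
   Context: A map is a finite, connected, simply connected 2-complex embedded in the plane; degree of a vertex = number of oriented edges starting there (loops count twice), degree of a face = length of its boundary path. Exterior vertices are those on the boundary path of $M$. A $(p,q)$-map: every interior face has degree $\ge p$ and every interior vertex degree $\ge q$. A $\{p,q\}$-map is a $(p,q)$-map in which every face has degree at least $p$ and less than $2p$ and every vertex has degree less than $2q$. The curvature of a vertex $o$ is $\frac pq(q-d(o))-\mu(o)$, where $\mu(o)$ is the number of times the boundary path of $M$ passes through $o$. *)

theory Defs
  imports Complex_Main
begin

text \<open>
A map is encoded by a connected plane graph (the 1-skeleton) given as a combinatorial map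
(rotation system): a finite set of darts (oriented edges) D, a vertex set V, the tail
(starting vertex) of each dart, the dart reversal involution rv (fixed-point free, so every
edge, including loops, gives two darts), and the rotation sigma that cyclically permutes the
darts starting at each vertex. The face boundary paths are the orbits of
phi d = sigma (rv d). Genus 0 (planarity) is expressed by Euler's formula.
One face orbit, outer, is the boundary path of M (the unbounded region); all other face
orbits are the 2-cells (faces) of M. The one-vertex map has no darts; its boundary path is
the trivial path.
\<close>

definition dorbit :: "('d \<Rightarrow> 'd) \<Rightarrow> 'd \<Rightarrow> 'd set" where
  "dorbit f x = {(f ^^ n) x | n. True}"

definition face_step :: "('d \<Rightarrow> 'd) \<Rightarrow> ('d \<Rightarrow> 'd) \<Rightarrow> 'd \<Rightarrow> 'd" where
  "face_step rv sigma d = sigma (rv d)"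

definition map_faces_all :: "'d set \<Rightarrow> ('d \<Rightarrow> 'd) \<Rightarrow> ('d \<Rightarrow> 'd) \<Rightarrow> 'd set set" where
  "map_faces_all D rv sigma = dorbit (face_step rv sigma) ` D"

definition is_plane_map ::
  "'d set \<Rightarrow> 'v set \<Rightarrow> ('d \<Rightarrow> 'v) \<Rightarrow> ('d \<Rightarrow> 'd) \<Rightarrow> ('d \<Rightarrow> 'd) \<Rightarrow> 'd set \<Rightarrow> bool" where
  "is_plane_map D V tail rv sigma outer \<longleftrightarrow>
     finite D \<and> finite V \<and>
     (\<forall>d\<in>D. rv d \<in> D \<and> rv d \<noteq> d \<and> rv (rv d) = d) \<and>
     bij_betw sigma D D \<and>
     (\<forall>d\<in>D. tail (sigma d) = tail d) \<and>
     (\<forall>d\<in>D. \<forall>e\<in>D. tail e = tail d \<longrightarrow> e \<in> dorbit sigma d) \<and>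
     tail ` D \<subseteq> V \<and>
     (D \<noteq> {} \<longrightarrow> V = tail ` D) \<and>
     (D = {} \<longrightarrow> card V = 1) \<and>
     (\<forall>d\<in>D. \<forall>e\<in>D. (\<lambda>x y. y = sigma x \<or> y = rv x)\<^sup>*\<^sup>* d e) \<and>
     (D \<noteq> {} \<longrightarrow>
        2 * int (card V) - int (card D) + 2 * int (card (map_faces_all D rv sigma)) = 4) \<and>
     (D \<noteq> {} \<longrightarrow> outer \<in> map_faces_all D rv sigma) \<and>
     (D = {} \<longrightarrow> outer = {})"

definition map_faces :: "'d set \<Rightarrow> ('d \<Rightarrow> 'd) \<Rightarrow> ('d \<Rightarrow> 'd) \<Rightarrow> 'd set \<Rightarrow> 'd set set" where
  "map_faces D rv sigma outer = map_faces_all D rv sigma - {outer}"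

definition face_degree :: "'d set \<Rightarrow> nat" where
  "face_degree F = card F"

text \<open>Degree of a vertex = number of oriented edges starting there (loops count twice).\<close>
definition vdeg :: "'d set \<Rightarrow> ('d \<Rightarrow> 'v) \<Rightarrow> 'v \<Rightarrow> nat" where
  "vdeg D tail v = card {d\<in>D. tail d = v}"

definition bmult :: "'d set \<Rightarrow> ('d \<Rightarrow> 'v) \<Rightarrow> 'v \<Rightarrow> nat" where
  "bmult outer tail v = card {d\<in>outer. tail d = v}"

definition ext_vertices :: "'d set \<Rightarrow> 'v set \<Rightarrow> ('d \<Rightarrow> 'v) \<Rightarrow> 'd set \<Rightarrow> 'v set" where
  "ext_vertices D V tail outer = (if D = {} then V else tail ` outer)"

definition curvature :: "nat \<Rightarrow> nat \<Rightarrow> 'd set \<Rightarrow> ('d \<Rightarrow> 'v) \<Rightarrow> 'd set \<Rightarrow> 'v \<Rightarrow> real" where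
  "curvature p q D tail outer v =
     real p / real q * (real q - real (vdeg D tail v)) - real (bmult outer tail v)"

definition is_pq_map ::
  "nat \<Rightarrow> nat \<Rightarrow> 'd set \<Rightarrow> 'v set \<Rightarrow> ('d \<Rightarrow> 'v) \<Rightarrow> ('d \<Rightarrow> 'd) \<Rightarrow> ('d \<Rightarrow> 'd) \<Rightarrow> 'd set \<Rightarrow> bool" where
  "is_pq_map p q D V tail rv sigma outer \<longleftrightarrow>
     is_plane_map D V tail rv sigma outer \<and>
     (\<forall>F\<in>map_faces D rv sigma outer.
        tail ` F \<inter> ext_vertices D V tail outer = {} \<longrightarrow> face_degree F \<ge> p) \<and>
     (\<forall>v\<in>V - ext_vertices D V tail outer. vdeg D tail v \<ge> q)"

definition is_braces_pq_map ::
  "nat \<Rightarrow> nat \<Rightarrow> 'd set \<Rightarrow> 'v set \<Rightarrow> ('d \<Rightarrow> 'v) \<Rightarrow> ('d \<Rightarrow> 'd) \<Rightarrow> ('d \<Rightarrow> 'd) \<Rightarrow> 'd set \<Rightarrow> bool" where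
  "is_braces_pq_map p q D V tail rv sigma outer \<longleftrightarrow>
     is_pq_map p q D V tail rv sigma outer \<and>
     (\<forall>F\<in>map_faces D rv sigma outer. p \<le> face_degree F \<and> face_degree F < 2 * p) \<and>
     (\<forall>v\<in>V. vdeg D tail v < 2 * q)"

end

theory Submission
  imports Defs
begin

text \<open>
Write \<open>F\<close> for the set of faces and \<open>D\<close> for the set of darts. Euler's formula gives
\<open>|V| = 1 + |D|/2 - |F|\<close>, and the condition \<open>1/p + 1/q = 1/2\<close> means \<open>p/q = p/2 - 1\<close>.
Interior vertices have degree at least \<open>q\<close>, so their curvature is nonpositive, and the
boundary multiplicities add up to the length \<open>b\<close> of the boundary path. Hence the exterior
curvature is at least \<open>p|V| - (p/q)|D| - b = p + |D| - b - p|F|\<close>. Since each dart not on the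
boundary path lies on exactly one face and each face has degree at least \<open>p\<close>,
\<open>|D| - b \<ge> p|F|\<close>, and the bound \<open>p\<close> follows.
\<close>

lemma funpow_mem: "f ` D \<subseteq> D \<Longrightarrow> x \<in> D \<Longrightarrow> (f ^^ n) x \<in> D"
  by (induction n) auto

lemma dorbit_subset: "f ` D \<subseteq> D \<Longrightarrow> x \<in> D \<Longrightarrow> dorbit f x \<subseteq> D"
  unfolding dorbit_def using funpow_mem[of f D x] by auto

lemma self_in_dorbit: "x \<in> dorbit f x"
  unfolding dorbit_def by (auto intro: exI[of _ 0])

lemma dorbit_trans: "y \<in> dorbit f x \<Longrightarrow> dorbit f y \<subseteq> dorbit f x"
proof
  fix z assume "y \<in> dorbit f x" "z \<in> dorbit f y"
  then obtain m n where "y = (f ^^ m) x" "z = (f ^^ n) y" unfolding dorbit_def by blast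
  then have "z = (f ^^ (n + m)) x" by (simp add: funpow_add)
  then show "z \<in> dorbit f x" unfolding dorbit_def by blast
qed

lemma funpow_period:
  assumes "finite D" "inj_on f D" "f ` D \<subseteq> D" "x \<in> D"
  obtains k where "k > 0" "(f ^^ k) x = x"
proof -
  \<comment> \<open>\<open>g\<close> agrees with \<open>f\<close> on \<open>D\<close> and is globally injective, so the library's
      periodicity result for injective maps applies.\<close>
  define g where "g y = (if y \<in> D then f y else y)" for y
  have "inj g"
    using assms(3) by (auto simp: inj_def g_def dest: inj_onD[OF assms(2)])
  have g_iter: "(g ^^ n) x = (f ^^ n) x" for n
    by (induction n) (simp_all add: g_def funpow_mem[OF assms(3,4)])
  have "{y. \<exists>n. y = (g ^^ n) x} \<subseteq> D"
    using funpow_mem[OF assms(3,4)] by (auto simp: g_iter)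
  then have "finite {y. \<exists>n. y = (g ^^ n) x}"
    using assms(1) by (rule finite_subset)
  then obtain k where "k > 0" "(g ^^ k) x = x"
    using funpow_inj_finite[OF \<open>inj g\<close>] by blast
  then show thesis using that by (simp add: g_iter)
qed

lemma dorbit_sym:
  assumes "finite D" "inj_on f D" "f ` D \<subseteq> D" "x \<in> D" "y \<in> dorbit f x"
  shows "x \<in> dorbit f y"
proof -
  obtain k where "k > 0" "(f ^^ k) x = x" using funpow_period[OF assms(1-4)] .
  then have x_fix: "(f ^^ (k * m)) x = x" for m
    by (induction m) (simp_all add: funpow_add)
  obtain m where y: "y = (f ^^ m) x" using assms(5) unfolding dorbit_def by blast
  have "(f ^^ (k * m - m)) y = (f ^^ (k * m - m + m)) x"
    by (simp add: y funpow_add)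
  also have "\<dots> = x"
    using \<open>k > 0\<close> x_fix[of m] by (simp add: le_diff_conv2 add.commute)
  finally show ?thesis unfolding dorbit_def by blast
qed

lemma dorbit_eq:
  assumes "finite D" "inj_on f D" "f ` D \<subseteq> D" "x \<in> D" "y \<in> dorbit f x"
  shows "dorbit f y = dorbit f x"
  using dorbit_trans[OF assms(5)] dorbit_trans[OF dorbit_sym[OF assms]] by (rule antisym)

lemma card_eq_sum_card_dorbits:
  assumes "finite D" "inj_on f D" "f ` D \<subseteq> D"
  shows "card D = (\<Sum>F\<in>dorbit f ` D. card F)"
proof -
  have "\<Union>(dorbit f ` D) = D"
    using dorbit_subset[OF assms(3)] self_in_dorbit[of _ f] by auto
  moreover have "pairwise disjnt (dorbit f ` D)"
  proof (rule pairwiseI)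
    fix A B assume "A \<in> dorbit f ` D" "B \<in> dorbit f ` D" "A \<noteq> B"
    then obtain x y where "x \<in> D" "y \<in> D" "A = dorbit f x" "B = dorbit f y" by blast
    have "z \<notin> B" if "z \<in> A" for z
    proof
      assume "z \<in> B"
      have "dorbit f z = A" using dorbit_eq[OF assms \<open>x \<in> D\<close>] \<open>z \<in> A\<close> \<open>A = _\<close> by simp
      moreover have "dorbit f z = B" using dorbit_eq[OF assms \<open>y \<in> D\<close>] \<open>z \<in> B\<close> \<open>B = _\<close> by simp
      ultimately show False using \<open>A \<noteq> B\<close> by simp
    qed
    then show "disjnt A B" unfolding disjnt_def by blast
  qed
  moreover have "finite F" if "F \<in> dorbit f ` D" for F
    using that dorbit_subset[OF assms(3)] assms(1) by (auto intro: finite_subset)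
  ultimately show ?thesis
    using card_Union_disjoint[of "dorbit f ` D"] by simp
qed

lemma plane_map_face_step:
  assumes "is_plane_map D V tail rv sigma outer"
  shows "inj_on (face_step rv sigma) D" and "face_step rv sigma ` D \<subseteq> D"
proof -
  have rv: "\<forall>d\<in>D. rv d \<in> D \<and> rv (rv d) = d" and sigma: "bij_betw sigma D D"
    using assms unfolding is_plane_map_def by auto
  then have "inj_on rv D"
    by (metis inj_on_inverseI)
  then show "inj_on (face_step rv sigma) D"
    using rv sigma unfolding face_step_def bij_betw_def
    by (auto simp: inj_on_def)
  show "face_step rv sigma ` D \<subseteq> D"
    using rv sigma unfolding face_step_def bij_betw_def by auto
qed

lemma plane_map_card_darts:
  assumes "is_plane_map D V tail rv sigma outer"
  shows "card D = (\<Sum>F\<in>map_faces_all D rv sigma. card F)"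
proof -
  have "finite D" using assms unfolding is_plane_map_def by simp
  then show ?thesis
    unfolding map_faces_all_def
    by (rule card_eq_sum_card_dorbits[OF _ plane_map_face_step[OF assms]])
qed

lemma plane_map_outer_subset:
  assumes "is_plane_map D V tail rv sigma outer"
  shows "outer \<subseteq> D"
proof (cases "D = {}")
  case True
  then show ?thesis using assms unfolding is_plane_map_def by simp
next
  case False
  then obtain d where "d \<in> D" "outer = dorbit (face_step rv sigma) d"
    using assms unfolding is_plane_map_def map_faces_all_def by auto
  then show ?thesis
    using dorbit_subset[OF plane_map_face_step(2)[OF assms]] by simp
qed

lemma plane_map_euler:
  assumes "is_plane_map D V tail rv sigma outer"
  shows "2 * int (card V) - int (card D) + 2 * int (card (map_faces D rv sigma outer)) = 2"
proof (cases "D = {}")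
  case True
  then show ?thesis
    using assms unfolding is_plane_map_def map_faces_def map_faces_all_def by simp
next
  case False
  then have outer: "outer \<in> map_faces_all D rv sigma"
    and euler: "2 * int (card V) - int (card D) + 2 * int (card (map_faces_all D rv sigma)) = 4"
    using assms unfolding is_plane_map_def by auto
  have "finite (map_faces_all D rv sigma)"
    using assms unfolding is_plane_map_def map_faces_all_def by simp
  then have "card (map_faces D rv sigma outer) = card (map_faces_all D rv sigma) - 1"
    and "card (map_faces_all D rv sigma) > 0"
    using outer unfolding map_faces_def by (auto simp: card_Diff_singleton card_gt_0_iff)
  with euler show ?thesis by (simp add: of_nat_diff)
qed

lemma plane_map_card_darts_lower_bound:
  assumes "is_plane_map D V tail rv sigma outer"
    and "\<forall>F\<in>map_faces D rv sigma outer. p \<le> face_degree F"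
  shows "p * card (map_faces D rv sigma outer) + card outer \<le> card D"
proof (cases "D = {}")
  case True
  then show ?thesis
    using assms(1) unfolding is_plane_map_def map_faces_def map_faces_all_def by simp
next
  case False
  then have outer: "outer \<in> map_faces_all D rv sigma"
    using assms(1) unfolding is_plane_map_def by auto
  have finite: "finite (map_faces_all D rv sigma)"
    using assms(1) unfolding is_plane_map_def map_faces_all_def by simp
  have "p * card (map_faces D rv sigma outer) \<le> (\<Sum>F\<in>map_faces D rv sigma outer. card F)"
    using sum_bounded_below[of _ p card] assms(2) unfolding face_degree_def
    by (metis mult.commute of_nat_id)
  also have "\<dots> + card outer = card D"
    using plane_map_card_darts[OF assms(1)] sum.remove[OF finite outer, of card]
    unfolding map_faces_def by simp
  finally show ?thesis by simp
qed

lemma sum_vdeg: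
  assumes "finite D" "finite V" "tail ` D \<subseteq> V"
  shows "(\<Sum>v\<in>V. vdeg D tail v) = card D"
  using sum.group[OF assms, where h="\<lambda>_. 1::nat"] unfolding vdeg_def by simp

lemma sum_bmult:
  assumes "finite outer"
  shows "(\<Sum>v\<in>tail ` outer. bmult outer tail v) = card outer"
  using sum.group[OF assms finite_imageI[OF assms], where g=tail and h="\<lambda>_. 1::nat"]
  unfolding bmult_def by simp

lemma ext_vertices_subset:
  assumes "is_plane_map D V tail rv sigma outer"
  shows "ext_vertices D V tail outer \<subseteq> V"
proof -
  have "tail ` D \<subseteq> V" using assms unfolding is_plane_map_def by simp
  then show ?thesis
    using plane_map_outer_subset[OF assms] unfolding ext_vertices_def by auto
qed

lemma sum_bmult_ext_vertices:
  assumes "is_plane_map D V tail rv sigma outer"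
  shows "(\<Sum>v\<in>ext_vertices D V tail outer. bmult outer tail v) = card outer"
proof (cases "D = {}")
  case True
  then have "outer = {}" using assms unfolding is_plane_map_def by simp
  then show ?thesis unfolding bmult_def by simp
next
  case False
  have "finite D" using assms unfolding is_plane_map_def by simp
  then have "finite outer"
    using plane_map_outer_subset[OF assms] by (rule finite_subset[rotated])
  with False show ?thesis unfolding ext_vertices_def by (simp add: sum_bmult)
qed

lemma ext_curvature_sum_lower_bound:
  assumes "q > 0" and "is_pq_map p q D V tail rv sigma outer"
  shows "real p * card V - real p / real q * card D - card outer
    \<le> (\<Sum>w\<in>ext_vertices D V tail outer. curvature p q D tail outer w)"
proof -
  define E where "E = ext_vertices D V tail outer"
  define c where "c v = real p / real q * (real q - real (vdeg D tail v))" for v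
  have plane: "is_plane_map D V tail rv sigma outer"
    and interior: "\<forall>v\<in>V - E. q \<le> vdeg D tail v"
    using assms(2) unfolding is_pq_map_def E_def by auto
  have finite: "finite D" "finite V" and "tail ` D \<subseteq> V"
    using plane unfolding is_plane_map_def by auto
  have "(\<Sum>v\<in>V. real (vdeg D tail v)) = card D"
    using sum_vdeg[OF finite \<open>tail ` D \<subseteq> V\<close>] by (simp flip: of_nat_sum)
  then have "real p * card V - real p / real q * card D
      = (\<Sum>v\<in>V. real p) - real p / real q * (\<Sum>v\<in>V. real (vdeg D tail v))"
    by simp
  also have "\<dots> = (\<Sum>v\<in>V. real p - real p / real q * real (vdeg D tail v))"
    by (simp only: sum_subtractf sum_distrib_left)
  also have "\<dots> = (\<Sum>v\<in>V. c v)"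
    using assms(1) unfolding c_def by (simp add: right_diff_distrib)
  also have "\<dots> = (\<Sum>v\<in>E. c v) + (\<Sum>v\<in>V - E. c v)"
    using sum.subset_diff[OF ext_vertices_subset[OF plane] finite(2)] unfolding E_def
    by (simp add: add.commute)
  also have "\<dots> \<le> (\<Sum>v\<in>E. c v)"
  proof -
    have "c v \<le> 0" if "v \<in> V - E" for v
      using interior that unfolding c_def by (intro mult_nonneg_nonpos) auto
    then have "(\<Sum>v\<in>V - E. c v) \<le> 0" by (rule sum_nonpos)
    then show ?thesis by simp
  qed
  also have "\<dots> = (\<Sum>w\<in>E. curvature p q D tail outer w) + card outer"
    using sum_bmult_ext_vertices[OF plane]
    unfolding E_def c_def curvature_def by (simp add: sum_subtractf flip: of_nat_sum)
  finally show ?thesis unfolding E_def by simp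
qed

lemma ext_curvature_sum_ge_p:
  assumes "p > 0" "q > 0" "1 / real p + 1 / real q = 1 / 2"
    and "is_pq_map p q D V tail rv sigma outer"
    and "\<forall>F\<in>map_faces D rv sigma outer. p \<le> face_degree F"
  shows "real p \<le> (\<Sum>w\<in>ext_vertices D V tail outer. curvature p q D tail outer w)"
proof -
  have plane: "is_plane_map D V tail rv sigma outer"
    using assms(4) unfolding is_pq_map_def by simp
  define faces where "faces = real (card (map_faces D rv sigma outer))"
  have "real p / real q = real p / 2 - 1"
    using assms(1,3) by (simp add: field_simps)
  then have ratio: "real p / real q * card D = real p * card D / 2 - card D"
    by (subst \<open>real p / real q = _\<close>) (simp add: algebra_simps)
  have "real (card V) = 1 + card D / 2 - faces"
    using plane_map_euler[OF plane] unfolding faces_def by linarith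
  then have euler: "real p * card V = real p + real p * card D / 2 - real p * faces"
    by (subst \<open>real (card V) = _\<close>) (simp add: algebra_simps)
  have "real p * faces + card outer \<le> card D"
    using plane_map_card_darts_lower_bound[OF plane assms(5)] unfolding faces_def
    by (simp flip: of_nat_mult of_nat_add)
  then show ?thesis
    using ext_curvature_sum_lower_bound[OF assms(2,4)] ratio euler by linarith
qed

theorem lemma2p12:
  fixes p q :: nat
    and D :: "'d set" and V :: "'v set" and tail :: "'d \<Rightarrow> 'v"
    and rv sigma :: "'d \<Rightarrow> 'd" and outer :: "'d set"
  assumes "p > 0" and "q > 0"
    and "1 / real p + 1 / real q = 1 / 2"
    and "is_braces_pq_map p q D V tail rv sigma outer"
  shows "(\<Sum>w\<in>ext_vertices D V tail outer. curvature p q D tail outer w) \<ge> real p"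
proof -
  have "is_pq_map p q D V tail rv sigma outer"
    and "\<forall>F\<in>map_faces D rv sigma outer. p \<le> face_degree F"
    using assms(4) unfolding is_braces_pq_map_def by auto
  with assms(1-3) show ?thesis by (rule ext_curvature_sum_ge_p)
qed

end
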